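(* Let $\mathcal T$ be a self-orthogonal subcategory of $\mathcal C$. Then ${}_{\mathcal T}\mathcal X$ is closed under extensions, under direct summands, and under cones of inflations; the last means: for every $\mathbb E$-triangle $A\to B\to C\dashrightarrow$ with $A,B\in{}_{\mathcal T}\mathcal X$ one has $C\in{}_{\mathcal T}\mathcal X$.
   Context: $(\mathcal C,\mathbb E,\mathfrak s)$ is an extriangulated category in the sense of Nakaoka–Palu, Krull–Schmidt, with enough projectives and enough injectives; subcategories are full, additive, closed under isomorphisms. Higher extensions: $\mathbb E^1=\mathbb E$, $\mathbb E^{i+1}(X,Y)=\mathbb E(\Omega^iX,Y)\cong\mathbb E(X,\Sigma^iY)$. $\mathcal T$ is self-orthogonal if $\mathbb E^i(T_1,T_2)=0$ for all $i\ge1$, $T_1,T_2\in\mathcal T$. $\mathcal T^{\perp}=\{Y:\mathbb E^i(T,Y)=0\ \forall i\ge1,\forall T\in\mathcal T\}$. ${}_{\mathcal T}\mathcal X$ is the subcategory of objects $A$ for which there exist $\mathbb E$-triangles $K_{i+1}\to T_i\to K_i\dashrightarrow$ for all $i\ge0$ with $K_0=A$, $T_i\in\mathcal T$ and $K_{i+1}\in\mathcal T^{\perp}$ for all $i$. Closed under extensions: for every $\mathbb E$-triangle $A\to B\to C\dashrightarrow$ with $A,C$ in the subcategory, $B$ is in it. *)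

theory Defs
  imports Main
begin

text \<open>
  An extriangulated category (Nakaoka--Palu) is encoded as a record of data
  together with a predicate collecting all axioms.  Objects are all elements
  of the type 'o.  Morphisms live in an abelian group type 'm; the hom-set
  from X to Y is the subgroup hom C X Y (hom-sets may share the zero element,
  which is harmless since every statement is relativised to hom-sets).
  Composition: cmp C g f is "g after f".  Extensions live in an abelian group
  type 'e; ext C Z A is the group E(Z,A).  push C a d is a_* d and pull C c d
  is c^* d.  conf C A B Z x y d means that the sequence A --x--> B --y--> Z
  lies in the realization class s(d), i.e. A --x--> B --y--> Z --d--> is an
  E-triangle.
\<close>

record ('o, 'm, 'e) extri_data =
  hom  :: "'o \<Rightarrow> 'o \<Rightarrow> 'm set"
  cmp  :: "'m \<Rightarrow> 'm \<Rightarrow> 'm"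
  idm  :: "'o \<Rightarrow> 'm"
  ext  :: "'o \<Rightarrow> 'o \<Rightarrow> 'e set"
  push :: "'m \<Rightarrow> 'e \<Rightarrow> 'e"
  pull :: "'m \<Rightarrow> 'e \<Rightarrow> 'e"
  conf :: "'o \<Rightarrow> 'o \<Rightarrow> 'o \<Rightarrow> 'm \<Rightarrow> 'm \<Rightarrow> 'e \<Rightarrow> bool"

type_synonym ('o, 'm, 'e) extri = "('o, 'm, 'e) extri_data"

definition is_iso :: "('o, 'm::ab_group_add, 'e) extri \<Rightarrow> 'o \<Rightarrow> 'o \<Rightarrow> 'm \<Rightarrow> bool" where
  "is_iso C X Y f \<longleftrightarrow> f \<in> hom C X Y \<and>
     (\<exists>g \<in> hom C Y X. cmp C g f = idm C X \<and> cmp C f g = idm C Y)"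

definition isomorphic :: "('o, 'm::ab_group_add, 'e) extri \<Rightarrow> 'o \<Rightarrow> 'o \<Rightarrow> bool" where
  "isomorphic C X Y \<longleftrightarrow> (\<exists>f. is_iso C X Y f)"

definition is_zero_obj :: "('o, 'm::ab_group_add, 'e) extri \<Rightarrow> 'o \<Rightarrow> bool" where
  "is_zero_obj C Z \<longleftrightarrow> (\<forall>X. hom C Z X = {0} \<and> hom C X Z = {0})"

definition biproduct :: "('o, 'm::ab_group_add, 'e) extri \<Rightarrow> 'o \<Rightarrow> 'o \<Rightarrow> 'o \<Rightarrow>
    'm \<Rightarrow> 'm \<Rightarrow> 'm \<Rightarrow> 'm \<Rightarrow> bool" where
  "biproduct C X Y S i1 i2 p1 p2 \<longleftrightarrow>
     i1 \<in> hom C X S \<and> i2 \<in> hom C Y S \<and> p1 \<in> hom C S X \<and> p2 \<in> hom C S Y \<and>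
     cmp C p1 i1 = idm C X \<and> cmp C p2 i2 = idm C Y \<and>
     cmp C p1 i2 = 0 \<and> cmp C p2 i1 = 0 \<and>
     cmp C i1 p1 + cmp C i2 p2 = idm C S"

definition additive_cat :: "('o, 'm::ab_group_add, 'e) extri \<Rightarrow> bool" where
  "additive_cat C \<longleftrightarrow>
     (\<forall>X Y Z f g. f \<in> hom C X Y \<longrightarrow> g \<in> hom C Y Z \<longrightarrow> cmp C g f \<in> hom C X Z) \<and>
     (\<forall>X. idm C X \<in> hom C X X) \<and>
     (\<forall>W X Y Z f g h. f \<in> hom C W X \<longrightarrow> g \<in> hom C X Y \<longrightarrow> h \<in> hom C Y Z \<longrightarrow>
         cmp C h (cmp C g f) = cmp C (cmp C h g) f) \<and>
     (\<forall>X Y f. f \<in> hom C X Y \<longrightarrow> cmp C f (idm C X) = f \<and> cmp C (idm C Y) f = f) \<and>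
     (\<forall>X Y. 0 \<in> hom C X Y \<and> (\<forall>f \<in> hom C X Y. \<forall>g \<in> hom C X Y. f + g \<in> hom C X Y) \<and>
         (\<forall>f \<in> hom C X Y. - f \<in> hom C X Y)) \<and>
     (\<forall>X Y Z f f' g. f \<in> hom C X Y \<longrightarrow> f' \<in> hom C X Y \<longrightarrow> g \<in> hom C Y Z \<longrightarrow>
         cmp C g (f + f') = cmp C g f + cmp C g f') \<and>
     (\<forall>X Y Z f g g'. f \<in> hom C X Y \<longrightarrow> g \<in> hom C Y Z \<longrightarrow> g' \<in> hom C Y Z \<longrightarrow>
         cmp C (g + g') f = cmp C g f + cmp C g' f) \<and>
     (\<exists>Z. is_zero_obj C Z) \<and>
     (\<forall>X Y. \<exists>S i1 i2 p1 p2. biproduct C X Y S i1 i2 p1 p2)"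

definition local_obj :: "('o, 'm::ab_group_add, 'e) extri \<Rightarrow> 'o \<Rightarrow> bool" where
  "local_obj C X \<longleftrightarrow> idm C X \<noteq> 0 \<and>
     (\<forall>f \<in> hom C X X. is_iso C X X f \<or> is_iso C X X (idm C X - f))"

definition krull_schmidt :: "('o, 'm::ab_group_add, 'e) extri \<Rightarrow> bool" where
  "krull_schmidt C \<longleftrightarrow>
     (\<forall>X. \<exists>(n::nat) Xs inj prj.
        (\<forall>i<n. local_obj C (Xs i) \<and> inj i \<in> hom C (Xs i) X \<and> prj i \<in> hom C X (Xs i)) \<and>
        (\<forall>i<n. \<forall>j<n. cmp C (prj i) (inj j) = (if i = j then idm C (Xs i) else 0)) \<and>
        (\<Sum>i<n. cmp C (inj i) (prj i)) = idm C X)"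

definition ET1 :: "('o, 'm::ab_group_add, 'e::ab_group_add) extri \<Rightarrow> bool" where
  "ET1 C \<longleftrightarrow>
     (\<forall>Z A. 0 \<in> ext C Z A \<and> (\<forall>d \<in> ext C Z A. \<forall>d' \<in> ext C Z A. d + d' \<in> ext C Z A) \<and>
        (\<forall>d \<in> ext C Z A. - d \<in> ext C Z A)) \<and>
     (\<forall>Z A A' a d. a \<in> hom C A A' \<longrightarrow> d \<in> ext C Z A \<longrightarrow> push C a d \<in> ext C Z A') \<and>
     (\<forall>Z Z' A c d. c \<in> hom C Z' Z \<longrightarrow> d \<in> ext C Z A \<longrightarrow> pull C c d \<in> ext C Z' A) \<and>
     (\<forall>Z A d. d \<in> ext C Z A \<longrightarrow> push C (idm C A) d = d \<and> pull C (idm C Z) d = d) \<and>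
     (\<forall>Z A A' A'' a a' d. a \<in> hom C A A' \<longrightarrow> a' \<in> hom C A' A'' \<longrightarrow> d \<in> ext C Z A \<longrightarrow>
        push C (cmp C a' a) d = push C a' (push C a d)) \<and>
     (\<forall>Z Z' Z'' A c c' d. c \<in> hom C Z' Z \<longrightarrow> c' \<in> hom C Z'' Z' \<longrightarrow> d \<in> ext C Z A \<longrightarrow>
        pull C (cmp C c c') d = pull C c' (pull C c d)) \<and>
     (\<forall>Z Z' A A' a c d. a \<in> hom C A A' \<longrightarrow> c \<in> hom C Z' Z \<longrightarrow> d \<in> ext C Z A \<longrightarrow>
        push C a (pull C c d) = pull C c (push C a d)) \<and>
     (\<forall>Z A A' a a' d d'. a \<in> hom C A A' \<longrightarrow> a' \<in> hom C A A' \<longrightarrow>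
        d \<in> ext C Z A \<longrightarrow> d' \<in> ext C Z A \<longrightarrow>
        push C a (d + d') = push C a d + push C a d' \<and>
        push C (a + a') d = push C a d + push C a' d) \<and>
     (\<forall>Z Z' A c c' d d'. c \<in> hom C Z' Z \<longrightarrow> c' \<in> hom C Z' Z \<longrightarrow>
        d \<in> ext C Z A \<longrightarrow> d' \<in> ext C Z A \<longrightarrow>
        pull C c (d + d') = pull C c d + pull C c d' \<and>
        pull C (c + c') d = pull C c d + pull C c' d)"

definition ET2 :: "('o, 'm::ab_group_add, 'e::ab_group_add) extri \<Rightarrow> bool" where
  "ET2 C \<longleftrightarrow>
     (\<forall>A B Z x y d. conf C A B Z x y d \<longrightarrow>
        x \<in> hom C A B \<and> y \<in> hom C B Z \<and> d \<in> ext C Z A) \<and>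
     (\<forall>A Z d. d \<in> ext C Z A \<longrightarrow> (\<exists>B x y. conf C A B Z x y d)) \<and>
     (\<forall>A B B' Z x y x' y' d. conf C A B Z x y d \<longrightarrow>
        (conf C A B' Z x' y' d \<longleftrightarrow>
          x' \<in> hom C A B' \<and> y' \<in> hom C B' Z \<and>
          (\<exists>b. is_iso C B B' b \<and> cmp C b x = x' \<and> cmp C y' b = y))) \<and>
     (\<forall>A B Z x y d A' B' Z' x' y' d' a c.
        conf C A B Z x y d \<longrightarrow> conf C A' B' Z' x' y' d' \<longrightarrow>
        a \<in> hom C A A' \<longrightarrow> c \<in> hom C Z Z' \<longrightarrow> push C a d = pull C c d' \<longrightarrow>
        (\<exists>b \<in> hom C B B'. cmp C b x = cmp C x' a \<and> cmp C y' b = cmp C c y)) \<and>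
     (\<forall>A Z S i1 i2 p1 p2. biproduct C A Z S i1 i2 p1 p2 \<longrightarrow> conf C A S Z i1 p2 0) \<and>
     (\<forall>A B Z x y d A' B' Z' x' y' d'
        SA iA1 iA2 pA1 pA2 SB iB1 iB2 pB1 pB2 SZ iZ1 iZ2 pZ1 pZ2.
        conf C A B Z x y d \<longrightarrow> conf C A' B' Z' x' y' d' \<longrightarrow>
        biproduct C A A' SA iA1 iA2 pA1 pA2 \<longrightarrow>
        biproduct C B B' SB iB1 iB2 pB1 pB2 \<longrightarrow>
        biproduct C Z Z' SZ iZ1 iZ2 pZ1 pZ2 \<longrightarrow>
        conf C SA SB SZ
          (cmp C iB1 (cmp C x pA1) + cmp C iB2 (cmp C x' pA2))
          (cmp C iZ1 (cmp C y pB1) + cmp C iZ2 (cmp C y' pB2))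
          (push C iA1 (pull C pZ1 d) + push C iA2 (pull C pZ2 d')))"

definition ET3 :: "('o, 'm::ab_group_add, 'e::ab_group_add) extri \<Rightarrow> bool" where
  "ET3 C \<longleftrightarrow>
     (\<forall>A B Z x y d A' B' Z' x' y' d' a b.
        conf C A B Z x y d \<longrightarrow> conf C A' B' Z' x' y' d' \<longrightarrow>
        a \<in> hom C A A' \<longrightarrow> b \<in> hom C B B' \<longrightarrow> cmp C b x = cmp C x' a \<longrightarrow>
        (\<exists>c \<in> hom C Z Z'. cmp C c y = cmp C y' b \<and> push C a d = pull C c d'))"

definition ET3op :: "('o, 'm::ab_group_add, 'e::ab_group_add) extri \<Rightarrow> bool" where
  "ET3op C \<longleftrightarrow>
     (\<forall>A B Z x y d A' B' Z' x' y' d' b c.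
        conf C A B Z x y d \<longrightarrow> conf C A' B' Z' x' y' d' \<longrightarrow>
        b \<in> hom C B B' \<longrightarrow> c \<in> hom C Z Z' \<longrightarrow> cmp C c y = cmp C y' b \<longrightarrow>
        (\<exists>a \<in> hom C A A'. cmp C b x = cmp C x' a \<and> push C a d = pull C c d'))"

definition ET4 :: "('o, 'm::ab_group_add, 'e::ab_group_add) extri \<Rightarrow> bool" where
  "ET4 C \<longleftrightarrow>
     (\<forall>A B D f f' d C' F g g' d'.
        conf C A B D f f' d \<longrightarrow> conf C B C' F g g' d' \<longrightarrow>
        (\<exists>E h h' dm e d''.
           conf C A C' E h h' d'' \<and>
           conf C D E F dm e (push C f' d') \<and>
           h = cmp C g f \<and> cmp C dm f' = cmp C h' g \<and> cmp C e h' = g' \<and>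
           pull C dm d'' = d \<and> push C f d'' = pull C e d'))"

definition ET4op :: "('o, 'm::ab_group_add, 'e::ab_group_add) extri \<Rightarrow> bool" where
  "ET4op C \<longleftrightarrow>
     (\<forall>D A B f' f d F C' g' g d'.
        conf C D A B f' f d \<longrightarrow> conf C F B C' g' g d' \<longrightarrow>
        (\<exists>E h h' dm e d''.
           conf C E A C' h' h d'' \<and>
           conf C D E F dm e (pull C g' d) \<and>
           cmp C h' dm = f' \<and> cmp C g' e = cmp C f h' \<and> cmp C g f = h \<and>
           d' = push C e d'' \<and> push C dm d = pull C g d''))"

definition extriangulated :: "('o, 'm::ab_group_add, 'e::ab_group_add) extri \<Rightarrow> bool" where
  "extriangulated C \<longleftrightarrow> additive_cat C \<and> ET1 C \<and> ET2 C \<and> ET3 C \<and> ET3op C \<and> ET4 C \<and> ET4op C"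

definition projective :: "('o, 'm::ab_group_add, 'e::ab_group_add) extri \<Rightarrow> 'o \<Rightarrow> bool" where
  "projective C P \<longleftrightarrow>
     (\<forall>A B Z x y d c. conf C A B Z x y d \<longrightarrow> c \<in> hom C P Z \<longrightarrow>
        (\<exists>b \<in> hom C P B. cmp C y b = c))"

definition injective :: "('o, 'm::ab_group_add, 'e::ab_group_add) extri \<Rightarrow> 'o \<Rightarrow> bool" where
  "injective C I \<longleftrightarrow>
     (\<forall>A B Z x y d a. conf C A B Z x y d \<longrightarrow> a \<in> hom C A I \<longrightarrow>
        (\<exists>b \<in> hom C B I. cmp C b x = a))"

definition enough_projectives :: "('o, 'm::ab_group_add, 'e::ab_group_add) extri \<Rightarrow> bool" where
  "enough_projectives C \<longleftrightarrow>
     (\<forall>X. \<exists>K P x y d. projective C P \<and> conf C K P X x y d)"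

definition enough_injectives :: "('o, 'm::ab_group_add, 'e::ab_group_add) extri \<Rightarrow> bool" where
  "enough_injectives C \<longleftrightarrow>
     (\<forall>X. \<exists>I Z x y d. injective C I \<and> conf C X I Z x y d)"

definition syzygy :: "('o, 'm::ab_group_add, 'e::ab_group_add) extri \<Rightarrow> ('o \<Rightarrow> 'o) \<Rightarrow> bool" where
  "syzygy C \<Omega> \<longleftrightarrow> (\<forall>X. \<exists>P x y d. projective C P \<and> conf C (\<Omega> X) P X x y d)"

text \<open>Higher extension groups: E^1 = E and E^(i+1)(X,Y) = E(Omega^i X, Y).
  Only meaningful for i \<ge> 1.\<close>
definition hext :: "('o, 'm::ab_group_add, 'e::ab_group_add) extri \<Rightarrow> ('o \<Rightarrow> 'o) \<Rightarrow>
    nat \<Rightarrow> 'o \<Rightarrow> 'o \<Rightarrow> 'e set" where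
  "hext C \<Omega> i X Y = ext C ((\<Omega> ^^ (i - 1)) X) Y"

text \<open>Full additive subcategory closed under isomorphisms, given by its
  class of objects.\<close>
definition subcat :: "('o, 'm::ab_group_add, 'e::ab_group_add) extri \<Rightarrow> 'o set \<Rightarrow> bool" where
  "subcat C T \<longleftrightarrow>
     (\<forall>X Y. X \<in> T \<longrightarrow> isomorphic C X Y \<longrightarrow> Y \<in> T) \<and>
     (\<forall>Z. is_zero_obj C Z \<longrightarrow> Z \<in> T) \<and>
     (\<forall>X Y S i1 i2 p1 p2. biproduct C X Y S i1 i2 p1 p2 \<longrightarrow> X \<in> T \<longrightarrow> Y \<in> T \<longrightarrow> S \<in> T)"

definition self_orthogonal :: "('o, 'm::ab_group_add, 'e::ab_group_add) extri \<Rightarrow> ('o \<Rightarrow> 'o) \<Rightarrow>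
    'o set \<Rightarrow> bool" where
  "self_orthogonal C \<Omega> T \<longleftrightarrow>
     (\<forall>i\<ge>1. \<forall>T1 \<in> T. \<forall>T2 \<in> T. hext C \<Omega> i T1 T2 = {0})"

definition right_perp :: "('o, 'm::ab_group_add, 'e::ab_group_add) extri \<Rightarrow> ('o \<Rightarrow> 'o) \<Rightarrow>
    'o set \<Rightarrow> 'o set" where
  "right_perp C \<Omega> T = {Y. \<forall>i\<ge>1. \<forall>T0 \<in> T. hext C \<Omega> i T0 Y = {0}}"

definition TX :: "('o, 'm::ab_group_add, 'e::ab_group_add) extri \<Rightarrow> ('o \<Rightarrow> 'o) \<Rightarrow>
    'o set \<Rightarrow> 'o set" where
  "TX C \<Omega> T = {A. \<exists>(K :: nat \<Rightarrow> 'o) Tm x y d. K 0 = A \<and>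
      (\<forall>i. Tm i \<in> T \<and> K (Suc i) \<in> right_perp C \<Omega> T \<and>
           conf C (K (Suc i)) (Tm i) (K i) (x i) (y i) (d i))}"

definition ext_closed :: "('o, 'm::ab_group_add, 'e::ab_group_add) extri \<Rightarrow> 'o set \<Rightarrow> bool" where
  "ext_closed C S \<longleftrightarrow>
     (\<forall>A B Z x y d. conf C A B Z x y d \<longrightarrow> A \<in> S \<longrightarrow> Z \<in> S \<longrightarrow> B \<in> S)"

definition summand_closed :: "('o, 'm::ab_group_add, 'e::ab_group_add) extri \<Rightarrow> 'o set \<Rightarrow> bool" where
  "summand_closed C S \<longleftrightarrow>
     (\<forall>X Y W i1 i2 p1 p2. biproduct C X Y W i1 i2 p1 p2 \<longrightarrow> W \<in> S \<longrightarrow> X \<in> S)"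

definition cone_closed :: "('o, 'm::ab_group_add, 'e::ab_group_add) extri \<Rightarrow> 'o set \<Rightarrow> bool" where
  "cone_closed C S \<longleftrightarrow>
     (\<forall>A B Z x y d. conf C A B Z x y d \<longrightarrow> A \<in> S \<longrightarrow> B \<in> S \<longrightarrow> Z \<in> S)"

end

theory Submission
  imports Defs
begin

text \<open>
  Membership in \<open>\<^sub>T\<X>\<close> is coinductive: \<open>A \<in> \<^sub>T\<X>\<close> iff \<open>A \<in> T\<^sup>\<perp>\<close> and there is an \<open>\<bbbE>\<close>-triangle
  \<open>K \<rightarrow> T\<^sub>0 \<rightarrow> A\<close> with \<open>T\<^sub>0 \<in> T\<close> and \<open>K \<in> \<^sub>T\<X>\<close>. So each closure property is proved by exhibiting,
  for every object of the candidate class, such a cover whose kernel lies in the class or in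
  \<open>\<^sub>T\<X>\<close>, together with membership in \<open>T\<^sup>\<perp>\<close>. The latter follows from the long exact sequences
  of \<open>\<bbbE>\<close> (for cones shifting the degree with a syzygy). The covers come from the octahedral
  axiom (ET4op): an extension of objects of \<open>\<^sub>T\<X>\<close> is covered by the direct sum of covers of its
  ends, since \<open>\<bbbE>(T, \<^sub>T\<X>) = 0\<close> splits the relevant pullback; cones and summands are then reduced to
  extensions.
\<close>

locale extriangulated_category =
  fixes C :: "('o, 'm::ab_group_add, 'e::ab_group_add) extri"
  assumes extriangulated: "extriangulated C"
begin

lemma additive: "additive_cat C"
  and ET1_C: "ET1 C" and ET2_C: "ET2 C" and ET3_C: "ET3 C" and ET3op_C: "ET3op C"
  and ET4_C: "ET4 C" and ET4op_C: "ET4op C"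
  using extriangulated by (simp_all add: extriangulated_def)

lemma hom_cmp: "f \<in> hom C X Y \<Longrightarrow> g \<in> hom C Y Z \<Longrightarrow> cmp C g f \<in> hom C X Z"
  and hom_idm [simp, intro]: "idm C X \<in> hom C X X"
  and hom_zero [simp, intro]: "0 \<in> hom C X Y"
  and hom_add: "f \<in> hom C X Y \<Longrightarrow> g \<in> hom C X Y \<Longrightarrow> f + g \<in> hom C X Y"
  and hom_uminus: "f \<in> hom C X Y \<Longrightarrow> - f \<in> hom C X Y"
  using additive by (simp_all add: additive_cat_def)

lemma hom_diff: "f \<in> hom C X Y \<Longrightarrow> g \<in> hom C X Y \<Longrightarrow> f - g \<in> hom C X Y"
  unfolding diff_conv_add_uminus by (intro hom_add hom_uminus)

lemma cmp_assoc: "f \<in> hom C W X \<Longrightarrow> g \<in> hom C X Y \<Longrightarrow> h \<in> hom C Y Z \<Longrightarrow>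
    cmp C h (cmp C g f) = cmp C (cmp C h g) f"
  and cmp_idm_right [simp]: "f \<in> hom C X Y \<Longrightarrow> cmp C f (idm C X) = f"
  and cmp_idm_left [simp]: "f \<in> hom C X Y \<Longrightarrow> cmp C (idm C Y) f = f"
  and cmp_add_right: "f \<in> hom C X Y \<Longrightarrow> f' \<in> hom C X Y \<Longrightarrow> g \<in> hom C Y Z \<Longrightarrow>
    cmp C g (f + f') = cmp C g f + cmp C g f'"
  and cmp_add_left: "f \<in> hom C X Y \<Longrightarrow> g \<in> hom C Y Z \<Longrightarrow> g' \<in> hom C Y Z \<Longrightarrow>
    cmp C (g + g') f = cmp C g f + cmp C g' f"
  using additive by (simp_all add: additive_cat_def)

lemma cmp_zero_right [simp]: "g \<in> hom C Y Z \<Longrightarrow> cmp C g 0 = 0"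
  using cmp_add_right[OF hom_zero hom_zero] by simp

lemma cmp_zero_left [simp]: "f \<in> hom C X Y \<Longrightarrow> cmp C 0 f = 0"
  using cmp_add_left[OF _ hom_zero hom_zero] by simp

lemma cmp_diff_right:
  assumes "f \<in> hom C X Y" "f' \<in> hom C X Y" "g \<in> hom C Y Z"
  shows "cmp C g (f - f') = cmp C g f - cmp C g f'"
  using cmp_add_right[OF hom_diff assms(2,3), OF assms(1,2)] by (simp add: eq_diff_eq)

lemma cmp_diff_left:
  assumes "f \<in> hom C X Y" "g \<in> hom C Y Z" "g' \<in> hom C Y Z"
  shows "cmp C (g - g') f = cmp C g f - cmp C g' f"
  using cmp_add_left[OF assms(1) hom_diff assms(3), OF assms(2,3)] by (simp add: eq_diff_eq)

lemma zero_object_exists: obtains Z where "is_zero_obj C Z"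
proof -
  have "\<exists>Z. is_zero_obj C Z" using additive by (simp add: additive_cat_def)
  then show ?thesis using that by blast
qed

lemma biproduct_exists: obtains S i1 i2 p1 p2 where "biproduct C X Y S i1 i2 p1 p2"
proof -
  have "\<exists>S i1 i2 p1 p2. biproduct C X Y S i1 i2 p1 p2" using additive by (simp add: additive_cat_def)
  then show ?thesis using that by blast
qed

lemma hom_from_zero_object: "is_zero_obj C Z \<Longrightarrow> f \<in> hom C Z X \<Longrightarrow> f = 0"
  by (simp add: is_zero_obj_def)

lemma biproductD:
  assumes "biproduct C X Y S i1 i2 p1 p2"
  shows "i1 \<in> hom C X S" "i2 \<in> hom C Y S" "p1 \<in> hom C S X" "p2 \<in> hom C S Y"
    "cmp C p1 i1 = idm C X" "cmp C p2 i2 = idm C Y" "cmp C p1 i2 = 0" "cmp C p2 i1 = 0"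
    "cmp C i1 p1 + cmp C i2 p2 = idm C S"
  using assms unfolding biproduct_def by auto

lemma biproduct_swap: "biproduct C X Y S i1 i2 p1 p2 \<Longrightarrow> biproduct C Y X S i2 i1 p2 p1"
  unfolding biproduct_def by (simp add: add.commute)

lemma biproduct_zero_right:
  assumes "is_zero_obj C Z" shows "biproduct C X Z X (idm C X) 0 (idm C X) 0"
proof -
  have "idm C Z = 0" using assms hom_idm[of Z] unfolding is_zero_obj_def by blast
  moreover have "cmp C 0 0 = 0" using cmp_zero_left[of 0 X Z] by simp
  ultimately show ?thesis unfolding biproduct_def using cmp_idm_right[OF hom_idm] by simp
qed

lemma biproduct_zero_left: "is_zero_obj C Z \<Longrightarrow> biproduct C Z X X 0 (idm C X) 0 (idm C X)"
  using biproduct_swap biproduct_zero_right by blast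

lemma is_isoD: "is_iso C X Y b \<Longrightarrow> b \<in> hom C X Y"
  and is_iso_inverse: "is_iso C X Y b \<Longrightarrow> \<exists>g \<in> hom C Y X. cmp C g b = idm C X \<and> cmp C b g = idm C Y"
  by (simp_all add: is_iso_def)

lemma ext_zero [simp, intro]: "0 \<in> ext C Z A"
  and ext_add: "d \<in> ext C Z A \<Longrightarrow> d' \<in> ext C Z A \<Longrightarrow> d + d' \<in> ext C Z A"
  and ext_uminus: "d \<in> ext C Z A \<Longrightarrow> - d \<in> ext C Z A"
  and push_ext: "a \<in> hom C A A' \<Longrightarrow> d \<in> ext C Z A \<Longrightarrow> push C a d \<in> ext C Z A'"
  and pull_ext: "c \<in> hom C Z' Z \<Longrightarrow> d \<in> ext C Z A \<Longrightarrow> pull C c d \<in> ext C Z' A"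
  and push_idm [simp]: "d \<in> ext C Z A \<Longrightarrow> push C (idm C A) d = d"
  and pull_idm [simp]: "d \<in> ext C Z A \<Longrightarrow> pull C (idm C Z) d = d"
  and push_cmp: "a \<in> hom C A A' \<Longrightarrow> a' \<in> hom C A' A'' \<Longrightarrow> d \<in> ext C Z A \<Longrightarrow>
    push C (cmp C a' a) d = push C a' (push C a d)"
  and pull_cmp: "c \<in> hom C Z' Z \<Longrightarrow> c' \<in> hom C Z'' Z' \<Longrightarrow> d \<in> ext C Z A \<Longrightarrow>
    pull C (cmp C c c') d = pull C c' (pull C c d)"
  and push_pull: "a \<in> hom C A A' \<Longrightarrow> c \<in> hom C Z' Z \<Longrightarrow> d \<in> ext C Z A \<Longrightarrow>
    push C a (pull C c d) = pull C c (push C a d)"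
  and push_add_ext: "a \<in> hom C A A' \<Longrightarrow> d \<in> ext C Z A \<Longrightarrow> d' \<in> ext C Z A \<Longrightarrow>
    push C a (d + d') = push C a d + push C a d'"
  and push_add_hom: "a \<in> hom C A A' \<Longrightarrow> a' \<in> hom C A A' \<Longrightarrow> d \<in> ext C Z A \<Longrightarrow>
    push C (a + a') d = push C a d + push C a' d"
  and pull_add_ext: "c \<in> hom C Z' Z \<Longrightarrow> d \<in> ext C Z A \<Longrightarrow> d' \<in> ext C Z A \<Longrightarrow>
    pull C c (d + d') = pull C c d + pull C c d'"
  and pull_add_hom: "c \<in> hom C Z' Z \<Longrightarrow> c' \<in> hom C Z' Z \<Longrightarrow> d \<in> ext C Z A \<Longrightarrow>
    pull C (c + c') d = pull C c d + pull C c' d"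
  using ET1_C by (simp_all add: ET1_def)

lemma ext_diff: "d \<in> ext C Z A \<Longrightarrow> d' \<in> ext C Z A \<Longrightarrow> d - d' \<in> ext C Z A"
  unfolding diff_conv_add_uminus by (intro ext_add ext_uminus)

lemma push_zero_ext [simp]: "a \<in> hom C A A' \<Longrightarrow> push C a 0 = 0"
  using push_add_ext[OF _ ext_zero ext_zero] by simp

lemma pull_zero_hom [simp]: "d \<in> ext C Z A \<Longrightarrow> pull C 0 d = 0"
  using pull_add_hom[OF hom_zero hom_zero] by simp

lemma push_diff_hom:
  assumes "a \<in> hom C A A'" "a' \<in> hom C A A'" "d \<in> ext C Z A"
  shows "push C (a - a') d = push C a d - push C a' d"
  using push_add_hom[OF hom_diff assms(2,3), OF assms(1,2)] by (simp add: eq_diff_eq)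

lemma pull_diff_ext:
  assumes "c \<in> hom C Z' Z" "d \<in> ext C Z A" "d' \<in> ext C Z A"
  shows "pull C c (d - d') = pull C c d - pull C c d'"
  using pull_add_ext[OF assms(1) ext_diff assms(3), OF assms(2,3)] by (simp add: eq_diff_eq)

lemma conf_hom_infl: "conf C A B Z x y d \<Longrightarrow> x \<in> hom C A B"
  and conf_hom_defl: "conf C A B Z x y d \<Longrightarrow> y \<in> hom C B Z"
  and conf_ext: "conf C A B Z x y d \<Longrightarrow> d \<in> ext C Z A"
  and conf_split: "biproduct C A Z S i1 i2 p1 p2 \<Longrightarrow> conf C A S Z i1 p2 0"
  using ET2_C unfolding ET2_def by (elim conjE; metis)+

lemma conf_realize: "d \<in> ext C Z A \<Longrightarrow> \<exists>B x y. conf C A B Z x y d"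
  using ET2_C by (simp add: ET2_def)

lemma conf_iso_iff: "conf C A B Z x y d \<Longrightarrow>
    conf C A B' Z x' y' d \<longleftrightarrow> x' \<in> hom C A B' \<and> y' \<in> hom C B' Z \<and>
      (\<exists>b. is_iso C B B' b \<and> cmp C b x = x' \<and> cmp C y' b = y)"
  using ET2_C unfolding ET2_def by (elim conjE) metis

lemma conf_morphism: "conf C A B Z x y d \<Longrightarrow> conf C A' B' Z' x' y' d' \<Longrightarrow>
    a \<in> hom C A A' \<Longrightarrow> c \<in> hom C Z Z' \<Longrightarrow> push C a d = pull C c d' \<Longrightarrow>
    \<exists>b \<in> hom C B B'. cmp C b x = cmp C x' a \<and> cmp C y' b = cmp C c y"
  using ET2_C unfolding ET2_def by (elim conjE) metis

lemma conf_direct_sum: "conf C A B Z x y d \<Longrightarrow> conf C A' B' Z' x' y' d' \<Longrightarrow>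
    biproduct C A A' SA iA1 iA2 pA1 pA2 \<Longrightarrow> biproduct C B B' SB iB1 iB2 pB1 pB2 \<Longrightarrow>
    biproduct C Z Z' SZ iZ1 iZ2 pZ1 pZ2 \<Longrightarrow>
    conf C SA SB SZ
      (cmp C iB1 (cmp C x pA1) + cmp C iB2 (cmp C x' pA2))
      (cmp C iZ1 (cmp C y pB1) + cmp C iZ2 (cmp C y' pB2))
      (push C iA1 (pull C pZ1 d) + push C iA2 (pull C pZ2 d'))"
  by (rule ET2_C[unfolded ET2_def, THEN conjunct2, THEN conjunct2, THEN conjunct2, THEN conjunct2,
      THEN conjunct2, rule_format])

lemma ET3_morphism: "conf C A B Z x y d \<Longrightarrow> conf C A' B' Z' x' y' d' \<Longrightarrow>
    a \<in> hom C A A' \<Longrightarrow> b \<in> hom C B B' \<Longrightarrow> cmp C b x = cmp C x' a \<Longrightarrow>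
    \<exists>c \<in> hom C Z Z'. cmp C c y = cmp C y' b \<and> push C a d = pull C c d'"
  using ET3_C unfolding ET3_def by blast

lemma ET3op_morphism: "conf C A B Z x y d \<Longrightarrow> conf C A' B' Z' x' y' d' \<Longrightarrow>
    b \<in> hom C B B' \<Longrightarrow> c \<in> hom C Z Z' \<Longrightarrow> cmp C c y = cmp C y' b \<Longrightarrow>
    \<exists>a \<in> hom C A A'. cmp C b x = cmp C x' a \<and> push C a d = pull C c d'"
  using ET3op_C unfolding ET3op_def by blast

lemma ET4_octahedron: "conf C A B D f f' d \<Longrightarrow> conf C B C' F g g' d' \<Longrightarrow>
    \<exists>E h h' dm e d''. conf C A C' E h h' d'' \<and> conf C D E F dm e (push C f' d') \<and>
      h = cmp C g f \<and> cmp C dm f' = cmp C h' g \<and> cmp C e h' = g' \<and>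
      pull C dm d'' = d \<and> push C f d'' = pull C e d'"
  using ET4_C unfolding ET4_def by blast

lemma ET4op_octahedron: "conf C D A B f' f d \<Longrightarrow> conf C F B C' g' g d' \<Longrightarrow>
    \<exists>E h h' dm e d''. conf C E A C' h' h d'' \<and> conf C D E F dm e (pull C g' d) \<and>
      cmp C h' dm = f' \<and> cmp C g' e = cmp C f h' \<and> cmp C g f = h \<and>
      d' = push C e d'' \<and> push C dm d = pull C g d''"
  using ET4op_C unfolding ET4op_def by blast

subsection \<open>Exactness properties of \<open>\<bbbE>\<close>-triangles\<close>

lemma conf_zero_right: "is_zero_obj C Z \<Longrightarrow> conf C X X Z (idm C X) 0 0"
  using conf_split[OF biproduct_zero_right] .

lemma conf_zero_left: "is_zero_obj C Z \<Longrightarrow> conf C Z X X 0 (idm C X) 0"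
  using conf_split[OF biproduct_zero_left] .

lemma conf_cmp_zero:
  assumes c: "conf C A B Z x y d"
  shows "cmp C y x = 0"
proof -
  obtain Z0 where z: "is_zero_obj C Z0" by (rule zero_object_exists)
  from ET3_morphism[OF conf_zero_right[OF z] c hom_idm conf_hom_infl[OF c]] conf_hom_infl[OF c]
  obtain c' where "c' \<in> hom C Z0 Z" "cmp C c' 0 = cmp C y x" by auto
  then show ?thesis using hom_from_zero_object[OF z] cmp_zero_left[of 0 A Z0] by simp
qed

lemma conf_lift:
  assumes c: "conf C A B Z x y d" and c': "c \<in> hom C U Z" and "pull C c d = 0"
  shows "\<exists>b \<in> hom C U B. cmp C y b = c"
proof -
  obtain Z0 where z: "is_zero_obj C Z0" by (rule zero_object_exists)
  have "push C 0 0 = pull C c d" using assms push_zero_ext[of 0 Z0 A] by simp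
  from conf_morphism[OF conf_zero_left[OF z] c hom_zero c' this] c' show ?thesis by auto
qed

lemma conf_transport:
  assumes c: "conf C A B Z x y d" and b: "is_iso C B B' b"
  shows "\<exists>x' y'. conf C A B' Z x' y' d"
proof -
  obtain g where g: "g \<in> hom C B' B" "cmp C g b = idm C B" using is_iso_inverse[OF b] by blast
  have "cmp C (cmp C y g) b = y"
    using cmp_assoc[OF is_isoD[OF b] g(1) conf_hom_defl[OF c]] g(2) conf_hom_defl[OF c] by simp
  then have "conf C A B' Z (cmp C b x) (cmp C y g) d"
    using conf_iso_iff[OF c] b hom_cmp[OF conf_hom_infl[OF c] is_isoD[OF b]]
      hom_cmp[OF g(1) conf_hom_defl[OF c]] by blast
  then show ?thesis by blast
qed

lemma conf_zero_biproduct: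
  assumes c: "conf C A E Z x y 0"
  shows "\<exists>s r. biproduct C A Z E x s r y"
proof -
  have xh: "x \<in> hom C A E" and yh: "y \<in> hom C E Z"
    using conf_hom_infl[OF c] conf_hom_defl[OF c] .
  obtain S i1 i2 p1 p2 where bp: "biproduct C A Z S i1 i2 p1 p2" by (rule biproduct_exists)
  note h = biproductD[OF bp]
  obtain b where b: "is_iso C E S b" "cmp C b x = i1" "cmp C p2 b = y"
    using conf_iso_iff[OF c] conf_split[OF bp] by blast
  have bh: "b \<in> hom C E S" using is_isoD[OF b(1)] .
  obtain g where g: "g \<in> hom C S E" "cmp C g b = idm C E" "cmp C b g = idm C S"
    using is_iso_inverse[OF b(1)] by blast
  define s where "s = cmp C g i2"
  define r where "r = cmp C p1 b"
  have sh: "s \<in> hom C Z E" and rh: "r \<in> hom C E A"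
    using s_def r_def hom_cmp[OF h(2) g(1)] hom_cmp[OF bh h(3)] by simp_all
  have x_eq: "x = cmp C g i1" using cmp_assoc[OF xh bh g(1)] g(2) b(2) xh by simp
  have bs: "cmp C b s = i2" using s_def cmp_assoc[OF h(2) g(1) bh] g(3) h(2) by simp
  have "cmp C r x = idm C A" using r_def cmp_assoc[OF xh bh h(3)] b(2) h(5) by simp
  moreover have "cmp C y s = idm C Z" using bs b(3) cmp_assoc[OF sh bh h(4)] h(6) by simp
  moreover have "cmp C r s = 0" using bs r_def cmp_assoc[OF sh bh h(3)] h(7) by simp
  moreover have "cmp C x r + cmp C s y = idm C E"
  proof -
    have "cmp C x r = cmp C g (cmp C (cmp C i1 p1) b)"
      using x_eq r_def cmp_assoc[OF hom_cmp[OF bh h(3)] h(1) g(1), symmetric]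
        cmp_assoc[OF bh h(3) h(1)] by simp
    moreover have "cmp C s y = cmp C g (cmp C (cmp C i2 p2) b)"
      using s_def b(3) cmp_assoc[OF hom_cmp[OF bh h(4)] h(2) g(1), symmetric]
        cmp_assoc[OF bh h(4) h(2)] by simp
    ultimately have "cmp C x r + cmp C s y
        = cmp C g (cmp C (cmp C i1 p1) b) + cmp C g (cmp C (cmp C i2 p2) b)"
      by simp
    also have "\<dots> = cmp C g (cmp C (cmp C i1 p1 + cmp C i2 p2) b)"
      using cmp_add_left[OF bh hom_cmp[OF h(3) h(1)] hom_cmp[OF h(4) h(2)]]
        cmp_add_right[OF hom_cmp[OF bh hom_cmp[OF h(3) h(1)]] hom_cmp[OF bh hom_cmp[OF h(4) h(2)]]
          g(1)]
      by simp
    also have "\<dots> = idm C E" using h(9) bh g(2) by simp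
    finally show ?thesis .
  qed
  ultimately have "biproduct C A Z E x s r y"
    unfolding biproduct_def using xh yh sh rh conf_cmp_zero[OF c] by simp
  then show ?thesis by blast
qed

lemma push_exact:
  assumes c: "conf C A B Z x y dl" and d: "d \<in> ext C V B" and "push C y d = 0"
  shows "\<exists>d' \<in> ext C V A. d = push C x d'"
proof -
  obtain M m n where "conf C B M V m n d" using conf_realize[OF d] by blast
  from ET4_octahedron[OF c this] obtain E h h' dm e d'' where
    c1: "conf C A M E h h' d''" and c2: "conf C Z E V dm e (push C y d)"
    and r: "push C x d'' = pull C e d"
    by blast
  have "conf C Z E V dm e 0" using c2 \<open>push C y d = 0\<close> by simp
  then obtain s r' where "biproduct C Z V E dm s r' e" using conf_zero_biproduct by blast
  then have sh: "s \<in> hom C V E" and es: "cmp C e s = idm C V" by (simp_all add: biproductD)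
  have eh: "e \<in> hom C E V" and d'': "d'' \<in> ext C E A" using conf_hom_defl[OF c2] conf_ext[OF c1] .
  have "d = pull C (cmp C e s) d" using es d by simp
  also have "\<dots> = pull C s (push C x d'')" using pull_cmp[OF eh sh d] r by simp
  also have "\<dots> = push C x (pull C s d'')" using push_pull[OF conf_hom_infl[OF c] sh d''] by simp
  finally show ?thesis using pull_ext[OF sh d''] by blast
qed

lemma pull_exact:
  assumes c: "conf C A B Z x y dl" and \<eta>: "\<eta> \<in> ext C Z K" and "pull C y \<eta> = 0"
  shows "\<exists>\<phi> \<in> hom C A K. \<eta> = push C \<phi> dl"
proof -
  obtain Q q r where cq: "conf C K Q Z q r \<eta>" using conf_realize[OF \<eta>] by blast
  obtain S i1 i2 p1 p2 where bp: "biproduct C K B S i1 i2 p1 p2" by (rule biproduct_exists)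
  note h = biproductD[OF bp]
  have yh: "y \<in> hom C B Z" and rh: "r \<in> hom C Q Z"
    using conf_hom_defl[OF c] conf_hom_defl[OF cq] .
  have "push C (idm C K) 0 = pull C y \<eta>" using \<open>pull C y \<eta> = 0\<close> by simp
  from conf_morphism[OF conf_split[OF bp] cq hom_idm yh this]
  obtain \<beta> where \<beta>: "\<beta> \<in> hom C S Q" "cmp C r \<beta> = cmp C y p2" by blast
  define s where "s = cmp C \<beta> i2"
  have sh: "s \<in> hom C B Q" using s_def hom_cmp[OF h(2) \<beta>(1)] by simp
  have "cmp C r s = cmp C y (cmp C p2 i2)"
    using s_def cmp_assoc[OF h(2) \<beta>(1) rh] \<beta>(2) cmp_assoc[OF h(2) h(4) yh] by simp
  then have "cmp C (idm C Z) y = cmp C r s" using h(6) yh by simp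
  from ET3op_morphism[OF c cq sh hom_idm this] \<eta> show ?thesis by auto
qed

lemma biproduct_shear:
  assumes bp: "biproduct C K A E i s r p" and ph: "\<phi> \<in> hom C A K"
  shows "biproduct C K A E i (s + cmp C i \<phi>) (r - cmp C \<phi> p) p"
proof -
  note h = biproductD[OF bp]
  have ih: "cmp C i \<phi> \<in> hom C A E" and ph': "cmp C \<phi> p \<in> hom C E K"
    using hom_cmp[OF ph h(1)] hom_cmp[OF h(4) ph] .
  have pi: "cmp C p (cmp C i \<phi>) = 0" using cmp_assoc[OF ph h(1) h(4)] h(8) ph by simp
  have pi': "cmp C (cmp C \<phi> p) i = 0" using cmp_assoc[OF h(1) h(4) ph] h(8) ph by simp
  have "cmp C p (s + cmp C i \<phi>) = idm C A"
    using cmp_add_right[OF h(2) ih h(4)] pi h(6) by simp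
  moreover have "cmp C (r - cmp C \<phi> p) i = idm C K"
    using cmp_diff_left[OF h(1) h(3) ph'] pi' h(5) by simp
  moreover have "cmp C (r - cmp C \<phi> p) (s + cmp C i \<phi>) = 0"
  proof -
    have "cmp C r (cmp C i \<phi>) = \<phi>" using cmp_assoc[OF ph h(1) h(3)] h(5) ph by simp
    moreover have "cmp C (cmp C \<phi> p) s = \<phi>" using cmp_assoc[OF h(2) h(4) ph] h(6) ph by simp
    moreover have "cmp C (cmp C \<phi> p) (cmp C i \<phi>) = 0"
      using cmp_assoc[OF ih h(4) ph] pi ph by simp
    ultimately show ?thesis
      using cmp_diff_left[OF hom_add[OF h(2) ih] h(3) ph'] cmp_add_right[OF h(2) ih h(3)]
        cmp_add_right[OF h(2) ih ph'] h(7) by simp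
  qed
  moreover have "cmp C i (r - cmp C \<phi> p) + cmp C (s + cmp C i \<phi>) p = idm C E"
    using cmp_diff_right[OF h(3) ph' h(1)] cmp_add_left[OF h(4) h(2) ih]
      cmp_assoc[OF h(4) ph h(1)] h(9) by (simp add: algebra_simps)
  ultimately show ?thesis
    unfolding biproduct_def using h(1,4,8) hom_add[OF h(2) ih] hom_diff[OF h(3) ph'] by simp
qed

text \<open>\<open>N\<close> is the pullback of \<open>p\<close> along \<open>y\<close>, so its cone over \<open>A\<close> should be \<open>T\<^sub>0\<close>. (ET4op) gives a
  split triangle \<open>K \<rightarrow> E \<rightarrow> A\<close>; after correcting the retraction \<open>E \<rightarrow> K\<close> with \<open>pull_exact\<close> it
  pushes the extension of \<open>E \<rightarrow> N \<rightarrow> Z\<close> to \<open>ep\<close>, and (ET4) then yields the triangle.\<close>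

lemma conf_pullback:
  assumes c: "conf C A B Z x y dl" and t: "conf C K T0 Z i p ep"
    and n: "conf C K N B m q (pull C y ep)"
  shows "\<exists>E u v d. isomorphic C T0 E \<and> conf C A N E u v d"
proof -
  have xh: "x \<in> hom C A B" and yh: "y \<in> hom C B Z" and ep: "ep \<in> ext C Z K"
    using conf_hom_infl[OF c] conf_hom_defl[OF c] conf_ext[OF t] .
  obtain E f f' j e d'' where cE: "conf C E N Z f' f d''"
    and cK: "conf C K E A j e (pull C x (pull C y ep))"
    and dl: "dl = push C e d''" and jd: "push C j (pull C y ep) = pull C y d''"
    using ET4op_octahedron[OF n c] by blast
  have "pull C x (pull C y ep) = 0"
    using pull_cmp[OF yh xh ep, symmetric] conf_cmp_zero[OF c] ep by simp
  with cK have "conf C K E A j e 0" by simp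
  then obtain s r where bp: "biproduct C K A E j s r e" using conf_zero_biproduct by blast
  note h = biproductD[OF bp]
  have d'': "d'' \<in> ext C Z E" using conf_ext[OF cE] .
  define \<eta> where "\<eta> = push C r d'' - ep"
  have \<eta>: "\<eta> \<in> ext C Z K" using \<eta>_def ext_diff[OF push_ext[OF h(3) d''] ep] by simp
  have "pull C y (push C r d'') = push C r (push C j (pull C y ep))"
    using push_pull[OF h(3) yh d''] jd by simp
  also have "\<dots> = pull C y ep"
    using push_cmp[OF h(1) h(3) pull_ext[OF yh ep], symmetric] h(5) pull_ext[OF yh ep] by simp
  finally have "pull C y \<eta> = 0"
    using \<eta>_def pull_diff_ext[OF yh push_ext[OF h(3) d''] ep] by simp
  then obtain \<phi> where \<phi>: "\<phi> \<in> hom C A K" "\<eta> = push C \<phi> dl" using pull_exact[OF c \<eta>] by blast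
  define r' where "r' = r - cmp C \<phi> e"
  have "push C r' d'' = push C r d'' - push C \<phi> dl"
    using r'_def push_diff_hom[OF h(3) hom_cmp[OF h(4) \<phi>(1)] d''] push_cmp[OF h(4) \<phi>(1) d''] dl
    by simp
  also have "\<dots> = ep" using \<phi>(2) \<eta>_def by (simp add: algebra_simps)
  finally have r'd: "push C r' d'' = ep" .
  have "biproduct C K A E j (s + cmp C j \<phi>) r' e"
    using biproduct_shear[OF bp \<phi>(1)] r'_def by simp
  from conf_split[OF biproduct_swap[OF this]]
  have "conf C A E K (s + cmp C j \<phi>) r' 0" .
  from ET4_octahedron[OF this cE] obtain E3 u v k w d3
    where "conf C A N E3 u v d3" "conf C K E3 Z k w (push C r' d'')"
    by blast
  moreover from this(2) r'd obtain b where "is_iso C T0 E3 b" using conf_iso_iff[OF t] by auto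
  ultimately show ?thesis unfolding isomorphic_def by blast
qed

lemma ext_vanish_middle:
  assumes c: "conf C A B Z x y dl" and "ext C V A = {0}" and "ext C V Z = {0}"
  shows "ext C V B = {0}"
proof -
  have "d = 0" if d: "d \<in> ext C V B" for d
  proof -
    have "push C y d = 0" using assms(3) push_ext[OF conf_hom_defl[OF c] d] by blast
    with push_exact[OF c d] obtain d' where "d' \<in> ext C V A" "d = push C x d'" by blast
    then show ?thesis using assms(2) conf_hom_infl[OF c] by simp
  qed
  then show ?thesis by blast
qed

lemma ext_vanish_summand:
  assumes bp: "biproduct C X Y W i1 i2 p1 p2" and W: "ext C V W = {0}"
  shows "ext C V X = {0}"
proof -
  note h = biproductD[OF bp]
  have "d = 0" if d: "d \<in> ext C V X" for d
  proof -
    have "push C i1 d = 0" using W push_ext[OF h(1) d] by blast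
    moreover have "d = push C p1 (push C i1 d)" using push_cmp[OF h(1) h(3) d] h(5) d by simp
    ultimately show ?thesis using h(3) by simp
  qed
  then show ?thesis by blast
qed

text \<open>Lifting \<open>P \<rightarrow> V\<close> through the triangle realizing \<open>e \<in> \<bbbE>(V, Z)\<close> (\<open>P\<close> projective) shows that
  \<open>e\<close> is the push-forward of the syzygy class along some \<open>\<Omega> V \<rightarrow> Z\<close>; as \<open>\<bbbE>(\<Omega> V, A) = 0\<close>, this
  map factors through \<open>B\<close>, and \<open>\<bbbE>(V, B) = 0\<close>.\<close>

lemma ext_vanish_cone:
  assumes syz: "syzygy C \<Omega>" and c: "conf C A B Z x y dl"
    and B: "ext C V B = {0}" and A: "ext C (\<Omega> V) A = {0}"
  shows "ext C V Z = {0}"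
proof -
  have yh: "y \<in> hom C B Z" and dl: "dl \<in> ext C Z A" using conf_hom_defl[OF c] conf_ext[OF c] .
  have "e = 0" if e: "e \<in> ext C V Z" for e
  proof -
    obtain M u v where cM: "conf C Z M V u v e" using conf_realize[OF e] by blast
    obtain P q p dV where P: "projective C P" and cP: "conf C (\<Omega> V) P V q p dV"
      using syz unfolding syzygy_def by blast
    have ph: "p \<in> hom C P V" and dV: "dV \<in> ext C V (\<Omega> V)"
      using conf_hom_defl[OF cP] conf_ext[OF cP] .
    obtain g where g: "g \<in> hom C P M" "cmp C v g = p"
      using P[unfolded projective_def, rule_format, OF cM ph] by blast
    then have "cmp C (idm C V) p = cmp C v g" using ph by simp
    from ET3op_morphism[OF cP cM g(1) hom_idm this] obtain a where
      a: "a \<in> hom C (\<Omega> V) Z" "push C a dV = e" using e by auto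
    have "pull C a dl = 0" using A pull_ext[OF a(1) dl] by blast
    from conf_lift[OF c a(1) this] obtain b where b: "b \<in> hom C (\<Omega> V) B" "cmp C y b = a" by blast
    have "push C b dV = 0" using B push_ext[OF b(1) dV] by blast
    then show ?thesis using a(2) push_cmp[OF b(1) yh dV] b(2) yh by simp
  qed
  then show ?thesis by blast
qed

end

locale self_orthogonal_subcategory = extriangulated_category +
  fixes \<Omega> :: "'o \<Rightarrow> 'o" and T :: "'o set"
  assumes syzygy: "syzygy C \<Omega>" and subcat: "subcat C T"
    and self_orthogonal: "self_orthogonal C \<Omega> T"
begin

abbreviation Tperp :: "'o set" where "Tperp \<equiv> right_perp C \<Omega> T"
abbreviation XT :: "'o set" where "XT \<equiv> TX C \<Omega> T"

subsection \<open>The right perpendicular category\<close>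

lemma right_perp_iff: "Y \<in> Tperp \<longleftrightarrow> (\<forall>n. \<forall>U\<in>T. ext C ((\<Omega> ^^ n) U) Y = {0})"
proof
  assume "Y \<in> Tperp"
  then have "\<forall>i\<ge>1. \<forall>U\<in>T. ext C ((\<Omega> ^^ (i - 1)) U) Y = {0}"
    by (simp add: right_perp_def hext_def)
  then show "\<forall>n. \<forall>U\<in>T. ext C ((\<Omega> ^^ n) U) Y = {0}"
    by (metis diff_Suc_1 le_add1 plus_1_eq_Suc)
qed (simp add: right_perp_def hext_def)

lemma T_subset_perp: "T \<subseteq> Tperp"
  using self_orthogonal by (auto simp: self_orthogonal_def right_perp_def)

lemma perp_extension_closed:
  assumes c: "conf C A B Z x y d" and "A \<in> Tperp" "Z \<in> Tperp"
  shows "B \<in> Tperp"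
  unfolding right_perp_iff
proof (intro allI ballI)
  fix n U assume "U \<in> T"
  then show "ext C ((\<Omega> ^^ n) U) B = {0}"
    by (intro ext_vanish_middle[OF c]) (use assms in \<open>simp_all add: right_perp_iff\<close>)
qed

lemma perp_cone_closed:
  assumes c: "conf C A B Z x y d" and A: "A \<in> Tperp" and B: "B \<in> Tperp"
  shows "Z \<in> Tperp"
  unfolding right_perp_iff
proof (intro allI ballI)
  fix n U assume U: "U \<in> T"
  have "ext C ((\<Omega> ^^ Suc n) U) A = {0}" using A U unfolding right_perp_iff by blast
  then show "ext C ((\<Omega> ^^ n) U) Z = {0}"
    by (intro ext_vanish_cone[OF syzygy c]) (use B U in \<open>simp_all add: right_perp_iff\<close>)
qed

lemma perp_summand_closed:
  assumes bp: "biproduct C X Y W i1 i2 p1 p2" and "W \<in> Tperp"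
  shows "X \<in> Tperp"
  unfolding right_perp_iff
proof (intro allI ballI)
  fix n U assume "U \<in> T"
  then show "ext C ((\<Omega> ^^ n) U) X = {0}"
    by (intro ext_vanish_summand[OF bp]) (use assms in \<open>simp add: right_perp_iff\<close>)
qed

subsection \<open>Coinduction for \<open>\<^sub>T\<X>\<close>\<close>

lemma XT_cover:
  assumes "A \<in> XT"
  shows "\<exists>K T0 x y d. T0 \<in> T \<and> K \<in> XT \<and> K \<in> Tperp \<and> conf C K T0 A x y d"
proof -
  obtain K Tm x y d where K0: "K 0 = A" and
    K: "\<And>i. Tm i \<in> T \<and> K (Suc i) \<in> Tperp \<and> conf C (K (Suc i)) (Tm i) (K i) (x i) (y i) (d i)"
    using assms unfolding TX_def by blast
  have "K (Suc 0) \<in> XT"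
    unfolding TX_def
    using K[of "Suc _"] by (intro CollectI exI[of _ "\<lambda>i. K (Suc i)"] exI[of _ "\<lambda>i. Tm (Suc i)"]
        exI[of _ "\<lambda>i. x (Suc i)"] exI[of _ "\<lambda>i. y (Suc i)"] exI[of _ "\<lambda>i. d (Suc i)"]) simp
  then show ?thesis using K[of 0] K0 by blast
qed

lemma XT_subset_perp: "XT \<subseteq> Tperp"
  using XT_cover perp_cone_closed T_subset_perp by blast

lemma XT_coinduct:
  assumes step: "\<And>A. A \<in> S \<Longrightarrow> \<exists>K T0 x y d. T0 \<in> T \<and> K \<in> S \<and> K \<in> Tperp \<and> conf C K T0 A x y d"
  shows "S \<subseteq> XT"
proof
  fix A assume A: "A \<in> S"
  define kernel where
    "kernel B = (SOME K. K \<in> S \<and> K \<in> Tperp \<and> (\<exists>T0 x y d. T0 \<in> T \<and> conf C K T0 B x y d))" for B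
  have kernel: "kernel B \<in> S \<and> kernel B \<in> Tperp \<and>
      (\<exists>T0 x y d. T0 \<in> T \<and> conf C (kernel B) T0 B x y d)" if "B \<in> S" for B
    unfolding kernel_def by (rule someI_ex) (use step[OF that] in blast)
  define K where "K i = (kernel ^^ i) A" for i
  have KS: "K i \<in> S" for i by (induction i) (simp_all add: K_def A kernel)
  have "\<forall>i. \<exists>T0 x y d. T0 \<in> T \<and> K (Suc i) \<in> Tperp \<and> conf C (K (Suc i)) T0 (K i) x y d"
    using kernel[OF KS] by (simp add: K_def)
  then obtain Tm x y d where
    "\<forall>i. Tm i \<in> T \<and> K (Suc i) \<in> Tperp \<and> conf C (K (Suc i)) (Tm i) (K i) (x i) (y i) (d i)"
    by metis
  moreover have "K 0 = A" by (simp add: K_def)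
  ultimately show "A \<in> XT" unfolding TX_def by blast
qed

lemma XT_coinduct_upto:
  assumes step: "\<And>A. A \<in> S \<Longrightarrow>
    A \<in> Tperp \<and> (\<exists>K T0 x y d. T0 \<in> T \<and> K \<in> S \<union> XT \<and> conf C K T0 A x y d)"
  shows "S \<subseteq> XT"
proof -
  have "S \<union> XT \<subseteq> XT"
  proof (rule XT_coinduct)
    fix A assume "A \<in> S \<union> XT"
    then show "\<exists>K T0 x y d. T0 \<in> T \<and> K \<in> S \<union> XT \<and> K \<in> Tperp \<and> conf C K T0 A x y d"
    proof
      assume "A \<in> S"
      then show ?thesis using step XT_subset_perp by blast
    qed (use XT_cover in blast)
  qed
  then show ?thesis by blast
qed

subsection \<open>Closure properties of \<open>\<^sub>T\<X>\<close>\<close>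

text \<open>Cover \<open>A\<close> and \<open>Z\<close> by \<open>K\<^sub>A \<rightarrow> T\<^sub>A \<rightarrow> A\<close> and \<open>K\<^sub>Z \<rightarrow> T\<^sub>Z \<rightarrow> Z\<close>. The pullback \<open>N\<close> of \<open>T\<^sub>Z \<rightarrow> Z\<close>
  along \<open>y\<close> is an extension of \<open>T\<^sub>Z\<close> by \<open>A\<close>, hence \<open>N \<cong> A \<oplus> T\<^sub>Z\<close> as \<open>\<bbbE>(T, A) = 0\<close>. The direct sum
  of the cover of \<open>A\<close> with \<open>0 \<rightarrow> T\<^sub>Z \<rightarrow> T\<^sub>Z\<close> is \<open>K\<^sub>A \<rightarrow> T\<^sub>A \<oplus> T\<^sub>Z \<rightarrow> N\<close>, and (ET4op) along
  \<open>K\<^sub>Z \<rightarrow> N \<rightarrow> B\<close> gives the cover of \<open>B\<close> together with \<open>K\<^sub>A \<rightarrow> K\<^sub>B \<rightarrow> K\<^sub>Z\<close>.\<close>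

lemma extension_cover:
  assumes c: "conf C A B Z x y dl" and A: "A \<in> XT" and Z: "Z \<in> XT"
  shows "\<exists>KA KB KZ T0 u v d j k e. T0 \<in> T \<and> KA \<in> XT \<and> KZ \<in> XT \<and>
           conf C KB T0 B u v d \<and> conf C KA KB KZ j k e"
proof -
  obtain KA TA xa pa ea where a: "TA \<in> T" "KA \<in> XT" "conf C KA TA A xa pa ea"
    using XT_cover[OF A] by blast
  obtain KZ TZ xz pz ez where z: "TZ \<in> T" "KZ \<in> XT" "conf C KZ TZ Z xz pz ez"
    using XT_cover[OF Z] by blast
  from conf_realize[OF pull_ext[OF conf_hom_defl[OF c] conf_ext[OF z(3)]]]
  obtain N n q where n: "conf C KZ N B n q (pull C y ez)" by blast
  obtain E u v d where "isomorphic C TZ E" and cN: "conf C A N E u v d"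
    using conf_pullback[OF c z(3) n] by blast
  then have E: "E \<in> T" using subcat z(1) unfolding subcat_def by blast
  have "A \<in> Tperp" using XT_subset_perp A by blast
  then have "ext C ((\<Omega> ^^ 0) E) A = {0}" using E unfolding right_perp_iff by blast
  then have "conf C A N E u v 0" using cN conf_ext[OF cN] by simp
  moreover obtain SN j1 j2 q1 q2 where bN: "biproduct C A E SN j1 j2 q1 q2" by (rule biproduct_exists)
  ultimately obtain \<beta> where "is_iso C N SN \<beta>" using conf_iso_iff conf_split by blast
  from conf_transport[OF n this] obtain n' q' where n': "conf C KZ SN B n' q' (pull C y ez)" by blast
  obtain Z0 where z0: "is_zero_obj C Z0" by (rule zero_object_exists)
  obtain SB k1 k2 r1 r2 where bB: "biproduct C TA E SB k1 k2 r1 r2" by (rule biproduct_exists)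
  from conf_direct_sum[OF a(3) conf_zero_left[OF z0] biproduct_zero_right[OF z0] bB bN]
  obtain xs ys ds where "conf C KA SB SN xs ys ds" by blast
  from ET4op_octahedron[OF this n'] obtain KB u' v' d' j k e
    where "conf C KB SB B u' v' d'" "conf C KA KB KZ j k e" by blast
  moreover have "SB \<in> T" using subcat bB a(1) E unfolding subcat_def by blast
  ultimately show ?thesis using a(2) z(2) by blast
qed

lemma XT_extension_closed:
  assumes "conf C A B Z x y d" "A \<in> XT" "Z \<in> XT"
  shows "B \<in> XT"
proof -
  let ?S = "{B. \<exists>A Z x y d. conf C A B Z x y d \<and> A \<in> XT \<and> Z \<in> XT}"
  have "?S \<subseteq> XT"
  proof (rule XT_coinduct_upto)
    fix B assume "B \<in> ?S"
    then obtain A Z x y d where c: "conf C A B Z x y d" "A \<in> XT" "Z \<in> XT" by blast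
    have "B \<in> Tperp" using perp_extension_closed c XT_subset_perp by blast
    moreover obtain KA KB KZ T0 u v d j k e where "T0 \<in> T" "KA \<in> XT" "KZ \<in> XT"
      "conf C KB T0 B u v d" "conf C KA KB KZ j k e"
      using extension_cover[OF c] by blast
    ultimately show "B \<in> Tperp \<and> (\<exists>K T0 x y d. T0 \<in> T \<and> K \<in> ?S \<union> XT \<and> conf C K T0 B x y d)"
      by blast
  qed
  then show ?thesis using assms by blast
qed

lemma XT_cone_closed:
  assumes "conf C A B Z x y d" "A \<in> XT" "B \<in> XT"
  shows "Z \<in> XT"
proof -
  let ?S = "{Z. \<exists>A B x y d. conf C A B Z x y d \<and> A \<in> XT \<and> B \<in> XT}"
  have "?S \<subseteq> XT"
  proof (rule XT_coinduct_upto)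
    fix Z assume "Z \<in> ?S"
    then obtain A B x y d where c: "conf C A B Z x y d" "A \<in> XT" "B \<in> XT" by blast
    have "Z \<in> Tperp" using perp_cone_closed c XT_subset_perp by blast
    moreover obtain KB TB i p e where b: "TB \<in> T" "KB \<in> XT" "conf C KB TB B i p e"
      using XT_cover[OF c(3)] by blast
    moreover obtain E u v d' j k e' where "conf C E TB Z u v d'" "conf C KB E A j k e'"
      using ET4op_octahedron[OF b(3) c(1)] by blast
    moreover from this(2) have "E \<in> XT" using XT_extension_closed b(2) c(2) by blast
    ultimately show "Z \<in> Tperp \<and> (\<exists>K T0 x y d. T0 \<in> T \<and> K \<in> ?S \<union> XT \<and> conf C K T0 Z x y d)"
      by blast
  qed
  then show ?thesis using assms by blast
qed

text \<open>For a cover \<open>K \<rightarrow> T\<^sub>0 \<rightarrow> W = X \<oplus> Y\<close>, (ET4op) along the split triangles \<open>Y \<rightarrow> W \<rightarrow> X\<close> and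
  \<open>X \<rightarrow> W \<rightarrow> Y\<close> gives \<open>E\<^sub>1 \<rightarrow> T\<^sub>0 \<rightarrow> X\<close> with \<open>K \<rightarrow> E\<^sub>1 \<rightarrow> Y\<close>, and \<open>K \<rightarrow> E\<^sub>2 \<rightarrow> X\<close>. The direct sum
  \<open>K \<oplus> K \<rightarrow> E\<^sub>1 \<oplus> E\<^sub>2 \<rightarrow> W\<close> puts \<open>E\<^sub>1 \<oplus> E\<^sub>2\<close> in \<open>\<^sub>T\<X>\<close> by extension closure, so the kernel \<open>E\<^sub>1\<close>
  is again a summand of an object of \<open>\<^sub>T\<X>\<close>.\<close>

lemma XT_summand_closed:
  assumes "biproduct C X Y W i1 i2 p1 p2" "W \<in> XT"
  shows "X \<in> XT"
proof -
  let ?S = "{X. \<exists>Y W i1 i2 p1 p2. biproduct C X Y W i1 i2 p1 p2 \<and> W \<in> XT}"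
  have "?S \<subseteq> XT"
  proof (rule XT_coinduct_upto)
    fix X assume "X \<in> ?S"
    then obtain Y W i1 i2 p1 p2 where bW: "biproduct C X Y W i1 i2 p1 p2" and W: "W \<in> XT"
      by blast
    have "X \<in> Tperp" using perp_summand_closed bW W XT_subset_perp by blast
    moreover obtain K T0 i p e where k: "T0 \<in> T" "K \<in> XT" "conf C K T0 W i p e"
      using XT_cover[OF W] by blast
    moreover obtain E1 u1 v1 d1 j1 k1 e1
      where e1: "conf C E1 T0 X u1 v1 d1" "conf C K E1 Y j1 k1 e1"
      using ET4op_octahedron[OF k(3) conf_split[OF biproduct_swap[OF bW]]] by blast
    moreover have "E1 \<in> ?S"
    proof -
      obtain E2 u2 v2 d2 j2 k2 e2 where e2: "conf C K E2 X j2 k2 e2"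
        using ET4op_octahedron[OF k(3) conf_split[OF bW]] by blast
      obtain SK a1 a2 q1 q2 where bK: "biproduct C K K SK a1 a2 q1 q2" by (rule biproduct_exists)
      obtain SE b1 b2 r1 r2 where bE: "biproduct C E1 E2 SE b1 b2 r1 r2" by (rule biproduct_exists)
      from conf_direct_sum[OF e1(2) e2 bK bE biproduct_swap[OF bW]]
      obtain xs ys ds where "conf C SK SE W xs ys ds" by blast
      moreover have "SK \<in> XT" using XT_extension_closed[OF conf_split[OF bK] k(2) k(2)] .
      ultimately have "SE \<in> XT" using XT_extension_closed W by blast
      then show ?thesis using bE by blast
    qed
    ultimately show "X \<in> Tperp \<and> (\<exists>K T0 x y d. T0 \<in> T \<and> K \<in> ?S \<union> XT \<and> conf C K T0 X x y d)"
      by blast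
  qed
  then show ?thesis using assms by blast
qed

end

theorem lemma3p6:
  fixes C :: "('o, 'm::ab_group_add, 'e::ab_group_add) extri"
    and \<Omega> :: "'o \<Rightarrow> 'o"
    and T :: "'o set"
  assumes "extriangulated C"
    and "krull_schmidt C"
    and "enough_projectives C"
    and "enough_injectives C"
    and "syzygy C \<Omega>"
    and "subcat C T"
    and "self_orthogonal C \<Omega> T"
  shows "ext_closed C (TX C \<Omega> T) \<and> summand_closed C (TX C \<Omega> T) \<and> cone_closed C (TX C \<Omega> T)"
proof -
  interpret self_orthogonal_subcategory C \<Omega> T
    using assms by unfold_locales
  show ?thesis
    unfolding ext_closed_def summand_closed_def cone_closed_def
    using XT_extension_closed XT_summand_closed XT_cone_closed by blast
qed

end
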